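(* Let $1\le m<n$. Fix $\mathbf s$ and valuations $v_1,\dots,v_n$, rename the bidders so that $v_1(\mathbf s)\ge\cdots\ge v_n(\mathbf s)$, and let $k=\max\{i:v_i(\mathbf s)>v_m(\mathbf s)/2\}$. Then for every $i\in[n]$, $$\mathbb E_{r,\pi}[c^m_i]\le\frac{m}{i(i+1)}+\frac{m}{k+1}+\sum_{j\in[k]\setminus\{i\}}\frac{m}{j(j+1)}\log_2^\dagger\!\left(\frac{v_i(\mathbf s)}{\underline v_j^{(i)}(\mathbf s)}\right).$$
   Context: $n$ bidders, signals $s_i\in S_i\subseteq\mathbb R$, valuations $v_i:\mathbf S\to\mathbb R_{>0}$. Lower estimates $\underline v_j^{(i)}(\mathbf s)=\inf_{o_i\in S_i}v_j(o_i,\mathbf s_{-i})$. $\log_2^\dagger(\alpha)=\max(0,\min(1,\log_2\alpha))$, with $a/0=\infty$, $\log_2\infty=\infty$. For $r\in[0,1)$, $w>0$: $f_r(w)=2^{r+k'}$ for the integer $k'$ with $2^{r+k'}\le w<2^{r+k'+1}$; $f_r(0)=0$. For a permutation $\pi$ of $[n]$, $a$ associated with bidder $i$ and $b$ with bidder $j$: $a>_\pi b$ iff $a>b$, or $a=b$ and $\pi(i)>\pi(j)$. $c^m_i(r,\pi)=1$ iff $f_r(v_i(\mathbf s))>_\pi f_r(\underline v_j^{(i)}(\mathbf s))$ for at least $n-m$ bidders $j\ne i$, else $0$; $r\sim U[0,1)$, $\pi$ uniform, independent. *)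

theory Defs
  imports "HOL-Analysis.Analysis"
begin

text \<open>Bidders are 1..n. A signal profile is an element of PiE {1..n} S.
  v i t is the valuation of bidder i at signal profile t.\<close>

definition lower_est :: "(nat \<Rightarrow> (nat \<Rightarrow> real) \<Rightarrow> real) \<Rightarrow> (nat \<Rightarrow> real set)
    \<Rightarrow> (nat \<Rightarrow> real) \<Rightarrow> nat \<Rightarrow> nat \<Rightarrow> real" where
  "lower_est v S s i j = Inf ((\<lambda>x. v j (s(i := x))) ` S i)"

text \<open>log2-dagger of a/b, with a/0 = infinity, log2 infinity = infinity.\<close>
definition log2_dag :: "real \<Rightarrow> real \<Rightarrow> real" where
  "log2_dag a b = (if b = 0 then 1 else max 0 (min 1 (log 2 (a / b))))"

definition f_r :: "real \<Rightarrow> real \<Rightarrow> real" where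
  "f_r r w = (if w = 0 then 0 else
     2 powr (r + real_of_int (THE k::int. 2 powr (r + k) \<le> w \<and> w < 2 powr (r + k + 1))))"

definition gt_pi :: "(nat \<Rightarrow> nat) \<Rightarrow> real \<Rightarrow> nat \<Rightarrow> real \<Rightarrow> nat \<Rightarrow> bool" where
  "gt_pi \<pi> a i b j \<longleftrightarrow> a > b \<or> (a = b \<and> \<pi> i > \<pi> j)"

definition c_m :: "nat \<Rightarrow> nat \<Rightarrow> (nat \<Rightarrow> (nat \<Rightarrow> real) \<Rightarrow> real) \<Rightarrow> (nat \<Rightarrow> real set)
    \<Rightarrow> (nat \<Rightarrow> real) \<Rightarrow> nat \<Rightarrow> real \<Rightarrow> (nat \<Rightarrow> nat) \<Rightarrow> real" where
  "c_m n m v S s i r \<pi> =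
     (if card {j \<in> {1..n} - {i}. gt_pi \<pi> (f_r r (v i s)) i (f_r r (lower_est v S s i j)) j} \<ge> n - m
      then 1 else 0)"

definition exp_c_m :: "nat \<Rightarrow> nat \<Rightarrow> (nat \<Rightarrow> (nat \<Rightarrow> real) \<Rightarrow> real) \<Rightarrow> (nat \<Rightarrow> real set)
    \<Rightarrow> (nat \<Rightarrow> real) \<Rightarrow> nat \<Rightarrow> real" where
  "exp_c_m n m v S s i =
     (\<Sum>\<pi>\<in>{p. p permutes {1..n}}. (LINT r:{0..<1}|lborel. c_m n m v S s i r \<pi>)) / fact n"

end

theory Submission
  imports Defs
begin

text \<open>Fix the random shift r and call a bidder j \<in> [k] \<setminus> {i} a threat if the rounded
  value f_r(v_i) does not exceed the rounded lower estimate f_r(v_j^(i)); say there are t of them.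
  Against a threat, i can only win through a tie broken in its favour by \<pi>; since at most
  n - 1 - t wins come from the other bidders, c^m_i = 1 forces i to be among the m highest
  of itself and the threats in \<pi>-order, which happens for a fraction at most m/(t+1) of all
  permutations. A telescoping estimate bounds m/(t+1) by m/(i(i+1)) + m/(k+1) plus m/(j(j+1))
  summed over the non-threats j. Finally, rounding on the grid 2^(r+\<int>) separates
  v_j^(i) < v_i only if a grid point falls between them, an event of probability at most
  min(1, log_2(v_i / v_j^(i))) over r.\<close>

lemma f_r_eq_powr_floor:
  assumes "w > 0"
  shows "f_r r w = 2 powr (r + real_of_int \<lfloor>log 2 w - r\<rfloor>)"
proof -
  have "2 powr (r + real_of_int k) \<le> w \<and> w < 2 powr (r + real_of_int k + 1)
        \<longleftrightarrow> \<lfloor>log 2 w - r\<rfloor> = k" for k :: int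
  proof -
    have "2 powr (r + real_of_int k) \<le> w \<longleftrightarrow> r + k \<le> log 2 w"
      "w < 2 powr (r + real_of_int k + 1) \<longleftrightarrow> log 2 w < r + k + 1"
      using assms by (simp_all add: le_log_iff log_less_iff)
    then show ?thesis
      unfolding floor_eq_iff by argo
  qed
  then have "(THE k::int. 2 powr (r + k) \<le> w \<and> w < 2 powr (r + k + 1)) = \<lfloor>log 2 w - r\<rfloor>"
    by (intro the_equality) auto
  with assms show ?thesis
    by (simp add: f_r_def)
qed

lemma f_r_less_iff_floor_less:
  assumes "L > 0" "V > 0"
  shows "f_r r L < f_r r V \<longleftrightarrow> \<lfloor>log 2 L - r\<rfloor> < \<lfloor>log 2 V - r\<rfloor>"
  using assms by (simp add: f_r_eq_powr_floor)

lemma borel_measurable_f_r [measurable]: "(\<lambda>r. f_r r w) \<in> borel_measurable borel"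
proof (cases w "0::real" rule: linorder_cases)
  case less
  then have "\<not> 2 powr (r + real_of_int k) \<le> w" for r and k :: int
    using powr_gt_zero[of 2 "r + real_of_int k"] by linarith
  then have "f_r r w = 2 powr (r + real_of_int (THE k::int. False))" for r
    using less by (simp add: f_r_def)
  then show ?thesis
    by simp
next
  case equal
  then show ?thesis
    by (simp add: f_r_def)
next
  case greater
  show ?thesis
    unfolding f_r_eq_powr_floor[OF greater] by measurable
qed

lemma measure_unit_interval_Int_le_1:
  assumes "X \<in> sets borel"
  shows "measure lborel ({0..<1::real} \<inter> X) \<le> 1"
proof -
  have "measure lborel ({0..<1::real} \<inter> X) \<le> measure lborel {0..<1::real}"
    using assms by (intro measure_mono_fmeasurable) (auto simp: fmeasurable_def)
  then show ?thesis
    by simp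
qed

lemma floor_shift_less_cases:
  fixes a b r :: real
  assumes "0 \<le> r" "r < 1" "\<lfloor>a - r\<rfloor> < \<lfloor>b - r\<rfloor>"
  shows "a - \<lfloor>b\<rfloor> < r \<and> r \<le> b - \<lfloor>b\<rfloor> \<or> a - \<lfloor>b\<rfloor> + 1 < r"
proof -
  have "\<lfloor>b - r\<rfloor> = \<lfloor>b\<rfloor> \<or> \<lfloor>b - r\<rfloor> = \<lfloor>b\<rfloor> - 1"
    using assms(1,2) by linarith
  moreover have "a - r < \<lfloor>b - r\<rfloor>"
    using assms(3) by (simp add: floor_less_iff)
  ultimately show ?thesis
    by linarith
qed

lemma measure_floor_shift_less_le:
  fixes a b :: real
  shows "measure lborel ({0..<1} \<inter> {r. \<lfloor>a - r\<rfloor> < \<lfloor>b - r\<rfloor>}) \<le> max 0 (min 1 (b - a))"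
proof -
  define E where "E = {0..<1} \<inter> {r::real. \<lfloor>a - r\<rfloor> < \<lfloor>b - r\<rfloor>}"
  define z where "z = real_of_int \<lfloor>b\<rfloor>"
  have z: "z \<le> b" "b < z + 1"
    unfolding z_def by linarith+
  have "measure lborel E \<le> max 0 (b - a)"
  proof (cases "b - a" "0::real" rule: linorder_cases)
    case less
    then have "\<lfloor>b - r\<rfloor> \<le> \<lfloor>a - r\<rfloor>" for r
      by (intro floor_mono) simp
    then have "E = {}"
      unfolding E_def by (simp add: not_less[symmetric])
    then show ?thesis
      by simp
  next
    case equal
    then show ?thesis
      unfolding E_def by simp
  next
    case greater
    show ?thesis
    proof (cases "z \<le> a")
      case True
      then have "E \<subseteq> {a - z<..b - z}"
        unfolding E_def z_def by (auto dest!: floor_shift_less_cases)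
      then have "measure lborel E \<le> measure lborel {a - z<..b - z}"
        using greater by (intro measure_mono_fmeasurable) (auto simp: E_def fmeasurable_def)
      then show ?thesis
        using greater by simp
    next
      case False
      then have "E \<subseteq> {0..b - z} \<union> {a - z + 1<..<1}"
        unfolding E_def z_def by (auto dest!: floor_shift_less_cases)
      then have "measure lborel E \<le> measure lborel ({0..b - z} \<union> {a - z + 1<..<1})"
        using z False
        by (intro measure_mono_fmeasurable fmeasurable.Un) (auto simp: E_def fmeasurable_def)
      also have "\<dots> \<le> measure lborel {0..b - z} + measure lborel {a - z + 1<..<1}"
        by (rule measure_Un_le) auto
      also have "\<dots> = b - a"
        using z False by simp
      finally show ?thesis
        by simp
    qed
  qed
  moreover have "measure lborel E \<le> 1"
    unfolding E_def by (rule measure_unit_interval_Int_le_1) measurable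
  ultimately show ?thesis
    unfolding E_def max_def min_def by (auto split: if_splits)
qed

lemma measure_f_r_less_le_log2_dag:
  assumes "V > 0" "L \<ge> 0"
  shows "measure lborel ({0..<1} \<inter> {r. f_r r L < f_r r V}) \<le> log2_dag V L"
proof (cases "L = 0")
  case True
  then show ?thesis
    by (simp add: log2_dag_def measure_unit_interval_Int_le_1)
next
  case False
  with assms have "{r. f_r r L < f_r r V} = {r. \<lfloor>log 2 L - r\<rfloor> < \<lfloor>log 2 V - r\<rfloor>}"
    by (simp add: f_r_less_iff_floor_less)
  moreover have "log2_dag V L = max 0 (min 1 (log 2 V - log 2 L))"
    using assms False by (simp add: log2_dag_def log_divide)
  ultimately show ?thesis
    using measure_floor_shift_less_le by simp
qed

definition rank_in :: "nat set \<Rightarrow> (nat \<Rightarrow> nat) \<Rightarrow> nat \<Rightarrow> nat" where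
  "rank_in U \<pi> x = card {j \<in> U. \<pi> j < \<pi> x}"

lemma card_rank_in_ge:
  assumes "finite U" "inj_on \<pi> U"
  shows "card {x \<in> U. q \<le> rank_in U \<pi> x} = card U - q"
proof -
  let ?R = "rank_in U \<pi>"
  have less: "?R x < ?R y" if "x \<in> U" "y \<in> U" "\<pi> x < \<pi> y" for x y
    unfolding rank_in_def using assms(1) that by (intro psubset_card_mono) auto
  have inj: "inj_on ?R U"
  proof (rule inj_onI)
    fix x y
    assume "x \<in> U" "y \<in> U" "?R x = ?R y"
    then show "x = y"
      using less[of x y] less[of y x] inj_onD[OF assms(2)] by (metis less_irrefl linorder_neqE_nat)
  qed
  have "?R ` U \<subseteq> {0..<card U}"
    unfolding rank_in_def using assms(1) by (auto intro!: psubset_card_mono)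
  then have img: "?R ` U = {0..<card U}"
    using card_image[OF inj] by (intro card_subset_eq) auto
  have "card {x \<in> U. q \<le> ?R x} = card (?R ` {x \<in> U. q \<le> ?R x})"
    by (intro card_image[symmetric] inj_on_subset[OF inj]) auto
  also have "?R ` {x \<in> U. q \<le> ?R x} = {y \<in> ?R ` U. q \<le> y}"
    by auto
  also have "\<dots> = {q..<card U}"
    unfolding img by auto
  finally show ?thesis
    by simp
qed

lemma rank_in_compose_transpose:
  assumes "i \<in> U" "x \<in> U"
  shows "rank_in U (\<pi> \<circ> Transposition.transpose i x) i = rank_in U \<pi> x"
proof -
  let ?\<tau> = "Transposition.transpose i x"
  have "bij_betw ?\<tau> {j \<in> U. \<pi> (?\<tau> j) < \<pi> x} {j \<in> U. \<pi> j < \<pi> x}"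
    using assms by (intro bij_betw_byWitness[where f' = ?\<tau>]) (auto simp: Transposition.transpose_def)
  then show ?thesis
    unfolding rank_in_def by (simp add: bij_betw_same_card)
qed

text \<open>Composing with the transposition of i and x exchanges their ranks, so every element of U
  clears the threshold for equally many permutations, while each single permutation lets exactly
  card U - q elements of U clear it.\<close>

lemma card_permutes_rank_in_ge:
  assumes "finite D" "U \<subseteq> D" "i \<in> U"
  shows "card {\<pi>. \<pi> permutes D \<and> q \<le> rank_in U \<pi> i} * card U = fact (card D) * (card U - q)"
proof -
  define P where "P = {\<pi>. \<pi> permutes D}"
  define N where "N x = card {\<pi> \<in> P. q \<le> rank_in U \<pi> x}" for x
  have "finite P"
    unfolding P_def using assms(1) by (rule finite_permutations)
  have "finite U"
    using assms(1,2) by (rule finite_subset[rotated])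
  have count: "N x = (\<Sum>\<pi>\<in>P. of_bool (q \<le> rank_in U \<pi> x))" for x
    using \<open>finite P\<close> by (simp add: N_def Int_def)
  have symmetric: "N x = N i" if "x \<in> U" for x
  proof -
    have "Transposition.transpose i x permutes D"
      using assms that by (intro permutes_swap_id) auto
    then have "N i = (\<Sum>\<pi>\<in>P. of_bool (q \<le> rank_in U (\<pi> \<circ> Transposition.transpose i x) i))"
      unfolding count P_def by (rule sum_permutations_compose_right)
    also have "\<dots> = N x"
      by (simp add: count rank_in_compose_transpose assms(3) that)
    finally show ?thesis ..
  qed
  have "N i * card U = (\<Sum>x\<in>U. N x)"
    using symmetric by simp
  also have "\<dots> = (\<Sum>\<pi>\<in>P. \<Sum>x\<in>U. of_bool (q \<le> rank_in U \<pi> x))"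
    unfolding count by (rule sum.swap)
  also have "\<dots> = (\<Sum>\<pi>\<in>P. card U - q)"
  proof (rule sum.cong)
    fix \<pi>
    assume "\<pi> \<in> P"
    then have "inj_on \<pi> U"
      unfolding P_def by (auto dest: permutes_inj intro: inj_on_subset)
    then show "(\<Sum>x\<in>U. of_bool (q \<le> rank_in U \<pi> x)) = card U - q"
      using \<open>finite U\<close> by (simp add: Int_def card_rank_in_ge)
  qed simp
  also have "\<dots> = fact (card D) * (card U - q)"
    unfolding P_def using assms(1) by (simp add: card_permutations)
  finally show ?thesis
    by (simp add: N_def P_def)
qed

lemma c_m_le_rank_in_threshold:
  assumes "1 \<le> m" "i \<in> {1..n}" "T \<subseteq> {1..n} - {i}"
    and "\<And>j. j \<in> T \<Longrightarrow> f_r r (v i s) \<le> f_r r (lower_est v S s i j)"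
  shows "c_m n m v S s i r \<pi> \<le> of_bool (card T + 1 - m \<le> rank_in (insert i T) \<pi> i)"
proof (cases "c_m n m v S s i r \<pi> = 0")
  case False
  define B where "B = {j \<in> {1..n} - {i}. gt_pi \<pi> (f_r r (v i s)) i (f_r r (lower_est v S s i j)) j}"
  from False have "n - m \<le> card B"
    unfolding c_m_def B_def by (auto split: if_splits)
  have "finite T"
    using assms(3) finite_subset by blast
  have "B \<subseteq> ({1..n} - {i} - T) \<union> {j \<in> T. \<pi> j < \<pi> i}"
    using assms(4) by (force simp: B_def gt_pi_def)
  then have "card B \<le> card (({1..n} - {i} - T) \<union> {j \<in> T. \<pi> j < \<pi> i})"
    using \<open>finite T\<close> by (intro card_mono) auto
  also have "\<dots> \<le> card ({1..n} - {i} - T) + rank_in T \<pi> i"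
    unfolding rank_in_def by (rule card_Un_le)
  also have "card ({1..n} - {i} - T) = n - 1 - card T"
    using assms(2,3) \<open>finite T\<close> by (simp add: card_Diff_subset)
  finally have "card B \<le> n - 1 - card T + rank_in T \<pi> i" .
  moreover have "card T \<le> n - 1"
    using card_mono[OF _ assms(3)] assms(2) by simp
  ultimately have "card T + 1 - m \<le> rank_in T \<pi> i"
    using \<open>n - m \<le> card B\<close> assms(1) by linarith
  moreover have "rank_in (insert i T) \<pi> i = rank_in T \<pi> i"
    unfolding rank_in_def by (rule arg_cong[where f = card]) auto
  ultimately show ?thesis
    by (simp add: c_m_def)
qed (simp)

lemma sum_permutes_c_m_le:
  assumes "1 \<le> m" "i \<in> {1..n}" "T \<subseteq> {1..n} - {i}"
    and "\<And>j. j \<in> T \<Longrightarrow> f_r r (v i s) \<le> f_r r (lower_est v S s i j)"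
  shows "(\<Sum>\<pi> | \<pi> permutes {1..n}. c_m n m v S s i r \<pi>) \<le> fact n * (real m / (real (card T) + 1))"
proof -
  define q where "q = card T + 1 - m"
  define Q where "Q = {\<pi>. \<pi> permutes {1..n} \<and> q \<le> rank_in (insert i T) \<pi> i}"
  have "finite T" "i \<notin> T" "insert i T \<subseteq> {1..n}"
    using assms(2,3) finite_subset by auto
  have "(\<Sum>\<pi> | \<pi> permutes {1..n}. c_m n m v S s i r \<pi>)
        \<le> (\<Sum>\<pi> | \<pi> permutes {1..n}. of_bool (q \<le> rank_in (insert i T) \<pi> i))"
    unfolding q_def by (intro sum_mono c_m_le_rank_in_threshold assms)
  also have "\<dots> = real (card Q)"
    by (simp add: Q_def finite_permutations Int_def)
  also have "\<dots> \<le> fact n * (real m / (real (card T) + 1))"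
  proof -
    have "card Q * (card T + 1) = fact n * (card T + 1 - q)"
      using card_permutes_rank_in_ge[of "{1..n}" "insert i T" i q] \<open>finite T\<close> \<open>i \<notin> T\<close>
        \<open>insert i T \<subseteq> {1..n}\<close>
      by (simp add: Q_def)
    also have "\<dots> \<le> fact n * m"
      unfolding q_def by simp
    finally have "real (card Q * (card T + 1)) \<le> real (fact n * m)"
      by (rule of_nat_mono)
    then show ?thesis
      by (simp add: field_simps)
  qed
  finally show ?thesis .
qed

text \<open>The right-hand side is smallest when A consists of the card A largest elements of
  {1..k}, and there the sum telescopes to the left-hand side minus 1/(k+1).\<close>

lemma inverse_Suc_diff_card_le_sum:
  fixes A :: "nat set"
  assumes "A \<subseteq> {1..k}"
  shows "1 / (real (k - card A) + 1) \<le> 1 / (real k + 1) + (\<Sum>j\<in>A. 1 / (real j * (real j + 1)))"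
  using assms
proof (induction k arbitrary: A)
  case 0
  then show ?case
    by simp
next
  case (Suc k)
  have telescope: "1 / (real k + 1) - 1 / (real k + 2) = 1 / ((real k + 1) * (real k + 2))"
    by (simp add: field_simps)
  show ?case
  proof (cases "Suc k \<in> A")
    case False
    with Suc.prems have "A \<subseteq> {1..k}"
      by (auto simp: le_Suc_eq)
    note IH = Suc.IH[OF this]
    define u where "u = real (k - card A)"
    have "card A \<le> k"
      using card_mono[OF _ \<open>A \<subseteq> {1..k}\<close>] by simp
    then have u: "0 \<le> u" "u \<le> real k" "real (Suc k - card A) = u + 1"
      unfolding u_def by auto
    have "(u + 1) * (u + 2) \<le> (real k + 1) * (real k + 2)"
      using u by (intro mult_mono) auto
    then have "1 / ((real k + 1) * (real k + 2)) \<le> 1 / ((u + 1) * (u + 2))"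
      using u by (intro divide_left_mono) auto
    moreover have "1 / (u + 1) - 1 / (u + 2) = 1 / ((u + 1) * (u + 2))"
      using u by (simp add: field_simps)
    ultimately have "1 / (u + 2) - 1 / (real k + 2) \<le> 1 / (u + 1) - 1 / (real k + 1)"
      using telescope by linarith
    moreover have "1 / (real (Suc k - card A) + 1) = 1 / (u + 2)"
      using u(3) by (simp add: add_ac)
    moreover have "1 / (real (Suc k) + 1) = 1 / (real k + 2)"
      by (simp add: add_ac)
    ultimately show ?thesis
      using IH[folded u_def] by linarith
  next
    case True
    define A' where "A' = A - {Suc k}"
    have "A' \<subseteq> {1..k}"
      using Suc.prems by (auto simp: A'_def le_Suc_eq)
    note IH = Suc.IH[OF this]
    have "finite A"
      using Suc.prems finite_subset by blast
    then have "card A = card A' + 1"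
      using card_Suc_Diff1[OF _ True] by (simp add: A'_def)
    have "(\<Sum>j\<in>A. 1 / (real j * (real j + 1)))
        = (\<Sum>j\<in>A'. 1 / (real j * (real j + 1))) + 1 / ((real k + 1) * (real k + 2))"
      using True \<open>finite A\<close> by (simp add: A'_def sum.remove add_ac)
    moreover have "1 / (real (Suc k - card A) + 1) = 1 / (real (k - card A') + 1)"
      using \<open>card A = card A' + 1\<close> by simp
    moreover have "1 / (real (Suc k) + 1) = 1 / (real k + 2)"
      by (simp add: add_ac)
    ultimately show ?thesis
      using IH telescope by linarith
  qed
qed

lemma average_permutes_c_m_le:
  assumes "1 \<le> m" "i \<in> {1..n}" "k \<le> n"
  shows "(\<Sum>\<pi> | \<pi> permutes {1..n}. c_m n m v S s i r \<pi>) / fact n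
    \<le> real m / (real i * (real i + 1)) + real m / (real k + 1)
       + (\<Sum>j\<in>{1..k} - {i}. real m / (real j * (real j + 1))
            * indicator {r. f_r r (lower_est v S s i j) < f_r r (v i s)} r)"
proof -
  define beats where "beats j \<longleftrightarrow> f_r r (lower_est v S s i j) < f_r r (v i s)" for j
  define h where "h j = 1 / (real j * (real j + 1))" for j :: nat
  define A where "A = {j \<in> {1..k}. j = i \<or> beats j}"
  have "A \<subseteq> {1..k}" "{1..k} - A \<subseteq> {1..n} - {i}"
    using assms(3) by (auto simp: A_def)
  have "f_r r (v i s) \<le> f_r r (lower_est v S s i j)" if "j \<in> {1..k} - A" for j
    using that by (auto simp: A_def beats_def)
  then have "(\<Sum>\<pi> | \<pi> permutes {1..n}. c_m n m v S s i r \<pi>) / fact n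
      \<le> real m / (real (card ({1..k} - A)) + 1)"
    using sum_permutes_c_m_le[OF assms(1,2) \<open>{1..k} - A \<subseteq> {1..n} - {i}\<close>]
    by (simp add: pos_divide_le_eq mult.commute)
  also have "\<dots> = real m * (1 / (real (k - card A) + 1))"
    using \<open>A \<subseteq> {1..k}\<close> by (simp add: card_Diff_subset finite_subset)
  also have "\<dots> \<le> real m * (1 / (real k + 1) + sum h A)"
    unfolding h_def
    by (intro mult_left_mono inverse_Suc_diff_card_le_sum \<open>A \<subseteq> {1..k}\<close>) simp
  also have "sum h A \<le> h i + (\<Sum>j\<in>{1..k} - {i}. h j
      * indicator {r. f_r r (lower_est v S s i j) < f_r r (v i s)} r)"
  proof -
    have "sum h A \<le> sum h (insert i {j \<in> {1..k} - {i}. beats j})"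
      by (intro sum_mono2) (auto simp: A_def h_def)
    then show ?thesis
      by (simp add: Int_def indicator_def beats_def)
  qed
  also have "real m * (1 / (real k + 1) + (h i + (\<Sum>j\<in>{1..k} - {i}. h j
      * indicator {r. f_r r (lower_est v S s i j) < f_r r (v i s)} r)))
    = real m / (real i * (real i + 1)) + real m / (real k + 1)
       + (\<Sum>j\<in>{1..k} - {i}. real m / (real j * (real j + 1))
            * indicator {r. f_r r (lower_est v S s i j) < f_r r (v i s)} r)"
    by (simp add: h_def algebra_simps sum_distrib_left)
  finally show ?thesis
    by (simp add: mult_left_mono)
qed

lemma set_integrable_unit_interval_bounded:
  fixes f :: "real \<Rightarrow> real"
  assumes "f \<in> borel_measurable borel" "\<And>r. \<bar>f r\<bar> \<le> B"
  shows "set_integrable lborel {0..<1} f"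
proof (rule set_integrable_bound[where f = "\<lambda>_. B"])
  show "set_integrable lborel {0..<1::real} (\<lambda>_. B)"
    unfolding set_integrable_def by (intro integrable_indicator) simp_all
  show "set_borel_measurable lborel {0..<1::real} f"
    using assms(1) by (simp add: set_borel_measurable_def)
  show "AE r in lborel. r \<in> {0..<1::real} \<longrightarrow> norm (f r) \<le> norm B"
    using assms(2) by (auto intro: order_trans[OF _ abs_ge_self])
qed

lemma set_integral_unit_interval_le_indicator_sum:
  fixes f :: "real \<Rightarrow> real" and A :: "'a \<Rightarrow> real set"
  assumes "set_integrable lborel {0..<1} f" "\<And>j. A j \<in> sets borel"
    and "\<And>r. r \<in> {0..<1} \<Longrightarrow> f r \<le> C + (\<Sum>j\<in>J. w j * indicator (A j) r)"
  shows "(LINT r:{0..<1}|lborel. f r) \<le> C + (\<Sum>j\<in>J. w j * measure lborel ({0..<1} \<inter> A j))"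
proof -
  define g where "g r = C + (\<Sum>j\<in>J. w j * indicator (A j) r)" for r
  have "emeasure lborel ({0..<1} \<inter> A j) < \<infinity>" for j
    using emeasure_mono[of "{0..<1} \<inter> A j" "{0..<1::real}" lborel]
    by (simp add: le_less_trans[OF _ ennreal_one_less_top])
  then have "has_bochner_integral lborel (\<lambda>r. indicator {0..<1} r *\<^sub>R C
        + (\<Sum>j\<in>J. indicator ({0..<1} \<inter> A j) r *\<^sub>R w j))
      (measure lborel {0..<1::real} *\<^sub>R C + (\<Sum>j\<in>J. measure lborel ({0..<1} \<inter> A j) *\<^sub>R w j))"
    using assms(2) by (intro has_bochner_integral_add has_bochner_integral_sum has_bochner_integral_indicator) auto
  also have "(\<lambda>r. indicator {0..<1} r *\<^sub>R C + (\<Sum>j\<in>J. indicator ({0..<1} \<inter> A j) r *\<^sub>R w j))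
      = (\<lambda>r. indicator {0..<1} r *\<^sub>R g r)"
    by (simp add: g_def fun_eq_iff indicator_inter_arith algebra_simps sum_distrib_left)
  finally have "set_integrable lborel {0..<1} g"
    and "(LINT r:{0..<1}|lborel. g r) = C + (\<Sum>j\<in>J. w j * measure lborel ({0..<1} \<inter> A j))"
    unfolding set_integrable_def set_lebesgue_integral_def
    by (auto dest: has_bochner_integral_integral_eq integrable.intros simp: mult.commute)
  with assms(1,3) show ?thesis
    by (metis g_def set_integral_mono)
qed

lemma borel_measurable_c_m [measurable]: "(\<lambda>r. c_m n m v S s i r \<pi>) \<in> borel_measurable borel"
proof -
  have "(\<lambda>r. c_m n m v S s i r \<pi>) = (\<lambda>r. of_bool (real (n - m) \<le> (\<Sum>j\<in>{1..n} - {i}.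
      of_bool (gt_pi \<pi> (f_r r (v i s)) i (f_r r (lower_est v S s i j)) j))))"
    by (simp add: c_m_def fun_eq_iff Int_def del: of_nat_diff)
  also have "\<dots> \<in> borel_measurable borel"
    unfolding gt_pi_def by measurable
  finally show ?thesis .
qed

lemma set_integrable_c_m: "set_integrable lborel {0..<1} (\<lambda>r. c_m n m v S s i r \<pi>)"
  by (rule set_integrable_unit_interval_bounded[where B = 1]) (measurable, simp add: c_m_def)

lemma exp_c_m_eq_set_integral:
  "exp_c_m n m v S s i
    = (LINT r:{0..<1}|lborel. (\<Sum>\<pi> | \<pi> permutes {1..n}. c_m n m v S s i r \<pi>) / fact n)"
  using set_integrable_c_m[of n m v S s i]
  unfolding exp_c_m_def set_lebesgue_integral_def set_integrable_def
  by (simp add: sum_distrib_left)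

lemma lower_est_nonneg:
  assumes "s \<in> PiE D S" "i \<in> D" "\<And>t. t \<in> PiE D S \<Longrightarrow> v j t > 0"
  shows "lower_est v S s i j \<ge> 0"
  unfolding lower_est_def
proof (rule cINF_greatest)
  show "S i \<noteq> {}"
    using assms(1,2) by (auto simp: PiE_iff)
  show "0 \<le> v j (s(i := x))" if "x \<in> S i" for x
    using assms that by (force simp: PiE_iff extensional_def intro: less_imp_le)
qed

theorem mainTheorem17:
  fixes n m :: nat and S :: "nat \<Rightarrow> real set" and s :: "nat \<Rightarrow> real"
    and v :: "nat \<Rightarrow> (nat \<Rightarrow> real) \<Rightarrow> real" and k :: nat
  assumes "1 \<le> m" and "m < n"
    and "s \<in> PiE {1..n} S"
    and "\<And>t j. t \<in> PiE {1..n} S \<Longrightarrow> j \<in> {1..n} \<Longrightarrow> v j t > 0"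
    and "\<And>a b. 1 \<le> a \<Longrightarrow> a \<le> b \<Longrightarrow> b \<le> n \<Longrightarrow> v b s \<le> v a s"
    and "k = Max {a \<in> {1..n}. v a s > v m s / 2}"
    and "i \<in> {1..n}"
  shows "exp_c_m n m v S s i \<le>
           real m / (real i * (real i + 1)) + real m / (real k + 1)
           + (\<Sum>j\<in>{1..k} - {i}. real m / (real j * (real j + 1))
                 * log2_dag (v i s) (lower_est v S s i j))"
proof -
  \<comment> \<open>Of the hypotheses on the ordering of the values and on k, only k \<le> n is needed.\<close>
  have "m \<in> {a \<in> {1..n}. v a s > v m s / 2}"
    using assms(1-4) by auto
  then have "k \<in> {a \<in> {1..n}. v a s > v m s / 2}"
    unfolding assms(6) by (intro Max_in) auto
  then have "k \<le> n"
    by simp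
  have "v i s > 0"
    using assms(3,4,7) by blast
  have "set_integrable lborel {0..<1} (\<lambda>r. \<Sum>\<pi> | \<pi> permutes {1..n}. c_m n m v S s i r \<pi>)"
    using set_integrable_c_m unfolding set_integrable_def by (simp add: sum_distrib_left)
  then have "exp_c_m n m v S s i \<le> real m / (real i * (real i + 1)) + real m / (real k + 1)
      + (\<Sum>j\<in>{1..k} - {i}. real m / (real j * (real j + 1))
          * measure lborel ({0..<1} \<inter> {r. f_r r (lower_est v S s i j) < f_r r (v i s)}))"
    unfolding exp_c_m_eq_set_integral using assms(1,7) \<open>k \<le> n\<close>
    by (intro set_integral_unit_interval_le_indicator_sum average_permutes_c_m_le) auto
  also have "\<dots> \<le> real m / (real i * (real i + 1)) + real m / (real k + 1)
      + (\<Sum>j\<in>{1..k} - {i}. real m / (real j * (real j + 1)) * log2_dag (v i s) (lower_est v S s i j))"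
    using \<open>k \<le> n\<close> \<open>v i s > 0\<close> assms(3,4,7)
    by (intro add_left_mono sum_mono mult_left_mono measure_f_r_less_le_log2_dag lower_est_nonneg) auto
  finally show ?thesis .
qed

end
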